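(* Let $\mathrm{IC}(\mathbf{a}_0,\dots,\mathbf{a}_{n-1})$ be an interval circulant matrix. For any nonzero $A\in\mathrm{IC}(\mathbf{a}_0,\dots,\mathbf{a}_{n-1})$ there exists $k\in\{0,\dots,n-1\}$ such that $A^{(k)}\ne0$ and $A^{(k)}/\lambda(A^{(k)})\le A/\lambda(A)$ entrywise.
   Context: $\mathrm{Circ}(a_0,\dots,a_{n-1})$ is the matrix with $A_{i,j}=a_t$, $t\in\{0,\dots,n-1\}$, $t\equiv j-i\pmod n$. $\mathrm{IC}(\mathbf{a}_0,\dots,\mathbf{a}_{n-1})$ is the set of all $\mathrm{Circ}(a_0,\dots,a_{n-1})$ with $a_t\in\mathbf{a}_t$, where each $\mathbf{a}_t\subseteq\mathbb{R}_+$ is a nonempty interval of one of the forms $[\underline{a}_t,\overline{a}_t]$, $(\underline{a}_t,\overline{a}_t)$, $(\underline{a}_t,\overline{a}_t]$, $[\underline{a}_t,\overline{a}_t)$. For $k\in\{0,\dots,n-1\}$, $A^{(k)}=\mathrm{Circ}(\underline{a}_0,\dots,\underline{a}_{k-1},\overline{a}_k,\underline{a}_{k+1},\dots,\underline{a}_{n-1})$. $\lambda(\cdot)$ is the greatest max-algebraic eigenvalue (maximum cycle geometric mean). *)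

theory Defs
  imports Complex_Main
begin

text \<open>n x n matrices are functions nat => nat => real, indices 0..n-1, zero outside.\<close>

definition circ :: "nat \<Rightarrow> (nat \<Rightarrow> real) \<Rightarrow> (nat \<Rightarrow> nat \<Rightarrow> real)" where
  "circ n a = (\<lambda>i j. if i < n \<and> j < n then a ((j + n - i) mod n) else 0)"

definition ivl :: "real \<Rightarrow> real \<Rightarrow> bool \<Rightarrow> bool \<Rightarrow> real set" where
  "ivl lo hi lc rc = {x. (if lc then lo \<le> x else lo < x) \<and> (if rc then x \<le> hi else x < hi)}"

definition IC :: "nat \<Rightarrow> (nat \<Rightarrow> real) \<Rightarrow> (nat \<Rightarrow> real) \<Rightarrow> (nat \<Rightarrow> bool) \<Rightarrow> (nat \<Rightarrow> bool)
                   \<Rightarrow> (nat \<Rightarrow> nat \<Rightarrow> real) set" where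
  "IC n lo hi lc rc = {circ n a | a. \<forall>t<n. a t \<in> ivl (lo t) (hi t) (lc t) (rc t)}"

definition Ak :: "nat \<Rightarrow> (nat \<Rightarrow> real) \<Rightarrow> (nat \<Rightarrow> real) \<Rightarrow> nat \<Rightarrow> (nat \<Rightarrow> nat \<Rightarrow> real)" where
  "Ak n lo hi k = circ n (\<lambda>t. if t = k then hi t else lo t)"

text \<open>Max-algebraic eigenvalue = maximum cycle geometric mean, taken over all closed walks
  p 0 -> p 1 -> ... -> p m = p 0 of length 1 <= m <= n (equal to the max over elementary cycles).\<close>
definition mp_lambda :: "nat \<Rightarrow> (nat \<Rightarrow> nat \<Rightarrow> real) \<Rightarrow> real" where
  "mp_lambda n A = Max {root m (\<Prod>j<m. A (p j) (p (Suc j))) | m p.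
      1 \<le> m \<and> m \<le> n \<and> (\<forall>j\<le>m. p j < n) \<and> p m = p 0}"

end

theory Submission
  imports Defs "HOL-Library.FuncSet"
begin

text \<open>The greatest cycle mean of a nonnegative circulant is its largest coefficient \<open>c k\<close>:
  no closed walk can beat the largest entry, and the walk \<open>j \<mapsto> j k mod n\<close> uses only
  entries equal to \<open>c k\<close>. Hence for \<open>A = Circ(a)\<close> with \<open>a k\<close> maximal, \<open>A^(k)\<close> has
  eigenvalue \<open>hi k\<close> and \<open>A\<close> has eigenvalue \<open>a k\<close>; entrywise,
  \<open>hi k / hi k = a k / a k\<close> on the \<open>k\<close>-th diagonal and \<open>lo t / hi k \<le> a t / a k\<close> elsewhere.\<close>

definition cycle_means :: "nat \<Rightarrow> (nat \<Rightarrow> nat \<Rightarrow> real) \<Rightarrow> real set" where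
  "cycle_means n A = {root m (\<Prod>j<m. A (p j) (p (Suc j))) | m p.
      1 \<le> m \<and> m \<le> n \<and> (\<forall>j\<le>m. p j < n) \<and> p m = p 0}"

lemma mp_lambda_eq_Max_cycle_means: "mp_lambda n A = Max (cycle_means n A)"
  unfolding mp_lambda_def cycle_means_def ..

lemma finite_cycle_means: "finite (cycle_means n A)"
proof -
  define f where "f = (\<lambda>(m::nat, p::nat \<Rightarrow> nat). root m (\<Prod>j<m. A (p j) (p (Suc j))))"
  have "cycle_means n A \<subseteq> f ` (SIGMA m:{1..n}. {..m} \<rightarrow>\<^sub>E {..<n})"
  proof
    fix x assume "x \<in> cycle_means n A"
    then obtain m p where x: "x = root m (\<Prod>j<m. A (p j) (p (Suc j)))"
      and m: "1 \<le> m" "m \<le> n" and p: "\<forall>j\<le>m. p j < n"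
      unfolding cycle_means_def by blast
    have "x = f (m, restrict p {..m})"
      unfolding x f_def by (auto intro!: prod.cong arg_cong[where f="root m"])
    moreover have "(m, restrict p {..m}) \<in> (SIGMA m:{1..n}. {..m} \<rightarrow>\<^sub>E {..<n})"
      using m p by auto
    ultimately show "x \<in> f ` (SIGMA m:{1..n}. {..m} \<rightarrow>\<^sub>E {..<n})" by blast
  qed
  then show ?thesis
    by (rule finite_subset) (auto intro!: finite_PiE)
qed

lemma cycle_mean_le_entry_bound:
  assumes "\<forall>i<n. \<forall>j<n. 0 \<le> A i j \<and> A i j \<le> c" and "x \<in> cycle_means n A"
  shows "x \<le> c"
proof -
  obtain m p where x: "x = root m (\<Prod>j<m. A (p j) (p (Suc j)))"
    and m: "1 \<le> m" and p: "\<forall>j\<le>m. p j < n"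
    using assms(2) unfolding cycle_means_def by blast
  have entries: "0 \<le> A (p j) (p (Suc j)) \<and> A (p j) (p (Suc j)) \<le> c" if "j < m" for j
    using assms(1) p that by auto
  have "0 \<le> c" using entries[of 0] m by linarith
  have "(\<Prod>j<m. A (p j) (p (Suc j))) \<le> (\<Prod>j<m. c)"
    by (rule prod_mono) (use entries in auto)
  then have "x \<le> root m (c ^ m)"
    unfolding x using m by (simp add: real_root_le_iff)
  also have "\<dots> = c"
    using m \<open>0 \<le> c\<close> by (intro real_root_power_cancel) auto
  finally show ?thesis .
qed

lemma mod_mult_Suc_diff:
  fixes n k j :: nat
  assumes "k < n"
  shows "((Suc j * k) mod n + n - (j * k) mod n) mod n = k"
proof -
  have "(j * k) mod n < n" using assms by simp
  then have "int (((Suc j * k) mod n + n - (j * k) mod n) mod n)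
        = (int ((Suc j * k) mod n) + int n - int ((j * k) mod n)) mod int n"
    by (simp add: zmod_int of_nat_diff)
  also have "\<dots> = (int (Suc j * k) + int n - int (j * k)) mod int n"
    by (metis mod_diff_left_eq mod_diff_right_eq mod_add_left_eq zmod_int)
  also have "\<dots> = int k"
    using assms by (simp add: algebra_simps)
  finally show ?thesis by simp
qed

lemma circ_coeff_in_cycle_means:
  assumes "n \<ge> 1" and "k < n" and "0 \<le> c k"
  shows "c k \<in> cycle_means n (circ n c)"
proof -
  define p where "p = (\<lambda>j. (j * k) mod n)"
  have "circ n c (p j) (p (Suc j)) = c k" for j
    unfolding circ_def p_def using assms mod_mult_Suc_diff[OF \<open>k < n\<close>, of j] by auto
  then have "root n (\<Prod>j<n. circ n c (p j) (p (Suc j))) = c k"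
    using assms by (simp add: real_root_power_cancel)
  moreover have "root n (\<Prod>j<n. circ n c (p j) (p (Suc j))) \<in> cycle_means n (circ n c)"
    unfolding cycle_means_def using assms(1) by (auto simp: p_def intro!: exI[of _ n] exI[of _ p])
  ultimately show ?thesis by simp
qed

lemma mp_lambda_circ:
  assumes "n \<ge> 1" and "\<forall>t<n. 0 \<le> c t" and "k < n" and "\<forall>t<n. c t \<le> c k"
  shows "mp_lambda n (circ n c) = c k"
proof -
  have entry_bounds: "\<forall>i<n. \<forall>j<n. 0 \<le> circ n c i j \<and> circ n c i j \<le> c k"
    unfolding circ_def using assms by auto
  show ?thesis
    unfolding mp_lambda_eq_Max_cycle_means
  proof (rule Max_eqI[OF finite_cycle_means])
    show "x \<le> c k" if "x \<in> cycle_means n (circ n c)" for x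
      using cycle_mean_le_entry_bound[OF entry_bounds that] .
    show "c k \<in> cycle_means n (circ n c)"
      using circ_coeff_in_cycle_means assms by blast
  qed
qed

lemma circ_eq_zero_iff: "circ n c = (\<lambda>i j. 0) \<longleftrightarrow> (\<forall>t<n. c t = 0)"
proof
  assume "circ n c = (\<lambda>i j. 0)"
  moreover have "c t = circ n c 0 t" if "t < n" for t
    using that by (simp add: circ_def)
  ultimately show "\<forall>t<n. c t = 0" by simp
qed (auto simp: circ_def fun_eq_iff)

lemma circ_mono_scaled:
  assumes "\<forall>t<n. b t / \<beta> \<le> c t / \<gamma>" and "i < n" and "j < n"
  shows "circ n b i j / \<beta> \<le> circ n c i j / \<gamma>"
proof -
  have "(j + n - i) mod n < n" using assms(2) by simp
  then show ?thesis using assms by (simp add: circ_def)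
qed

lemma circ_max_coeff_pos:
  assumes "circ n a \<noteq> (\<lambda>i j. 0)" and "\<forall>t<n. 0 \<le> a t" and "\<forall>t<n. a t \<le> a k"
  shows "a k > 0"
proof (rule ccontr)
  assume "\<not> a k > 0"
  then have "\<forall>t<n. a t = 0" using assms(2,3) by (meson order.antisym not_le order_trans)
  with assms(1) show False unfolding circ_eq_zero_iff by blast
qed

lemma mp_lambda_Ak:
  assumes "n \<ge> 1" and "k < n" and "\<forall>t<n. 0 \<le> lo t \<and> lo t \<le> hi k"
  shows "mp_lambda n (Ak n lo hi k) = hi k"
proof -
  define b where "b = (\<lambda>t. if t = k then hi t else lo t)"
  have b_nonneg: "\<forall>t<n. 0 \<le> b t" and b_max: "\<forall>t<n. b t \<le> b k"
    using assms(2,3) unfolding b_def by force+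
  have "mp_lambda n (circ n b) = b k" using mp_lambda_circ[OF assms(1) b_nonneg assms(2) b_max] .
  then show ?thesis unfolding Ak_def b_def by simp
qed

lemma Ak_coeff_ratio_le:
  fixes lo hi a :: "nat \<Rightarrow> real"
  assumes "\<forall>t<n. 0 \<le> lo t \<and> lo t \<le> a t \<and> a t \<le> hi t" and "k < n" and "a k > 0"
  shows "\<forall>t<n. (if t = k then hi t else lo t) / hi k \<le> a t / a k"
proof (intro allI impI)
  fix t assume "t < n"
  have "a k \<le> hi k" using assms(1,2) by blast
  show "(if t = k then hi t else lo t) / hi k \<le> a t / a k"
  proof (cases "t = k")
    case True
    have "hi k \<noteq> 0" using \<open>a k \<le> hi k\<close> assms(3) by linarith
    with True show ?thesis using assms(3) by simp
  next
    case False
    have "0 \<le> a t" and "lo t \<le> a t" using assms(1) \<open>t < n\<close> by auto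
    then have "lo t / hi k \<le> a t / a k" using assms(3) \<open>a k \<le> hi k\<close> by (rule frac_le)
    with False show ?thesis by simp
  qed
qed

theorem lemma4:
  fixes n :: nat and lo hi :: "nat \<Rightarrow> real" and lc rc :: "nat \<Rightarrow> bool"
    and A :: "nat \<Rightarrow> nat \<Rightarrow> real"
  assumes "n \<ge> 1"
    and "\<forall>t<n. 0 \<le> lo t"
    and "\<forall>t<n. ivl (lo t) (hi t) (lc t) (rc t) \<noteq> {}"
    and "A \<in> IC n lo hi lc rc"
    and "A \<noteq> (\<lambda>i j. 0)"
  shows "\<exists>k<n. Ak n lo hi k \<noteq> (\<lambda>i j. 0) \<and>
           (\<forall>i<n. \<forall>j<n. Ak n lo hi k i j / mp_lambda n (Ak n lo hi k) \<le> A i j / mp_lambda n A)"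
proof -
  obtain a where A: "A = circ n a" and a_ivl: "\<forall>t<n. a t \<in> ivl (lo t) (hi t) (lc t) (rc t)"
    using assms(4) unfolding IC_def by blast
  have a_bounds: "\<forall>t<n. 0 \<le> lo t \<and> lo t \<le> a t \<and> a t \<le> hi t"
    using a_ivl assms(2) unfolding ivl_def by (auto split: if_splits)
  then have a_nonneg: "\<forall>t<n. 0 \<le> a t" by (meson order_trans)
  have "Max (a ` {..<n}) \<in> a ` {..<n}"
    using assms(1) by (intro Max_in) (auto simp: lessThan_empty_iff)
  then obtain k where k: "k < n" and "a k = Max (a ` {..<n})" by auto
  then have a_max: "\<forall>t<n. a t \<le> a k" by simp
  have "a k > 0" using assms(5) a_nonneg a_max unfolding A by (rule circ_max_coeff_pos)
  have "\<forall>t<n. 0 \<le> lo t \<and> lo t \<le> hi k"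
  proof (intro allI impI)
    fix t assume "t < n"
    then show "0 \<le> lo t \<and> lo t \<le> hi k"
      using a_bounds a_max k by (meson order_trans)
  qed
  then have lambda_Ak: "mp_lambda n (Ak n lo hi k) = hi k"
    by (rule mp_lambda_Ak[OF assms(1) k])
  have lambda_A: "mp_lambda n A = a k"
    unfolding A using mp_lambda_circ[OF assms(1) a_nonneg k a_max] .
  show ?thesis
  proof (intro exI[of _ k] conjI allI impI)
    show "Ak n lo hi k \<noteq> (\<lambda>i j. 0)"
      unfolding Ak_def circ_eq_zero_iff using k a_bounds \<open>a k > 0\<close> by fastforce
    fix i j assume "i < n" "j < n"
    then show "Ak n lo hi k i j / mp_lambda n (Ak n lo hi k) \<le> A i j / mp_lambda n A"
      unfolding lambda_Ak lambda_A unfolding Ak_def A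
      by (rule circ_mono_scaled[OF Ak_coeff_ratio_le[OF a_bounds k \<open>a k > 0\<close>]])
  qed (rule k)
qed

end
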